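(* Let $r_1,r_2,\mu,a_{12},a_{13},a_{21},a_{31},d$ be positive with $r_1>a_{12}$ and $a_{31}>\mu$, let $c>c_*:=2\sqrt{d(a_{31}-\mu)}$ and $\rho=c^2/d$. Consider the vector field on $\mathbb{R}^4$ \[ \dot X_1=X_1\big(r_1(1-X_1)-a_{12}X_2-a_{13}Y\big),\quad \dot X_2=X_2\big(r_2(1-X_2)+a_{21}X_1\big),\quad \dot Y=\rho(Y-Z),\quad \dot Z=Y(-\mu+a_{31}X_1). \] Let $\sigma_1=\frac{\rho+\sqrt{\rho^2-4\rho(a_{31}-\mu)}}{2\rho}$, $\sigma_2=\frac{\rho+\sqrt{\rho^2+4\rho\mu}}{2\rho}$, \[ \Sigma=\Big\{0\le X_1\le1,\ 0\le X_2\le 1+\tfrac{a_{21}}{r_2},\ Y\ge0,\ \sigma_1Y\le Z\le\sigma_2Y\Big\}, \] and \[ P_i=\Big\{0<X_1<1,\ 0<X_2<1+\tfrac{a_{21}}{r_2},\ Y>0,\ Z=\sigma_iY\Big\},\quad i=1,2. \] Then at every point $p\in P_1\cup P_2$ the vector field points to the outside of $\Sigma$.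
   Context: For $c>c_*$ one has $0<\sigma_1<1<\sigma_2$. *)

theory Defs
  imports "HOL-Analysis.Analysis"
begin

definition vf :: "real \<Rightarrow> real \<Rightarrow> real \<Rightarrow> real \<Rightarrow> real \<Rightarrow> real \<Rightarrow> real \<Rightarrow> real \<Rightarrow>
    real \<times> real \<times> real \<times> real \<Rightarrow> real \<times> real \<times> real \<times> real" where
  "vf r1 r2 \<mu> a12 a13 a21 a31 \<rho> p =
     (case p of (X1, X2, Y, Z) \<Rightarrow>
       (X1 * (r1 * (1 - X1) - a12 * X2 - a13 * Y),
        X2 * (r2 * (1 - X2) + a21 * X1),
        \<rho> * (Y - Z),
        Y * (- \<mu> + a31 * X1)))"

definition Sigma_set :: "real \<Rightarrow> real \<Rightarrow> real \<Rightarrow> real \<Rightarrow> (real \<times> real \<times> real \<times> real) set" where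
  "Sigma_set r2 a21 \<sigma>1 \<sigma>2 = {(X1, X2, Y, Z). 0 \<le> X1 \<and> X1 \<le> 1 \<and> 0 \<le> X2 \<and> X2 \<le> 1 + a21 / r2
      \<and> 0 \<le> Y \<and> \<sigma>1 * Y \<le> Z \<and> Z \<le> \<sigma>2 * Y}"

definition P_set :: "real \<Rightarrow> real \<Rightarrow> real \<Rightarrow> (real \<times> real \<times> real \<times> real) set" where
  "P_set r2 a21 \<sigma> = {(X1, X2, Y, Z). 0 < X1 \<and> X1 < 1 \<and> 0 < X2 \<and> X2 < 1 + a21 / r2
      \<and> 0 < Y \<and> Z = \<sigma> * Y}"

definition points_outside :: "('a::real_vector) set \<Rightarrow> ('a \<Rightarrow> 'a) \<Rightarrow> 'a \<Rightarrow> bool" where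
  "points_outside S F p \<longleftrightarrow> (\<exists>\<epsilon>>0. \<forall>t. 0 < t \<and> t < \<epsilon> \<longrightarrow> p + t *\<^sub>R F p \<notin> S)"

end

theory Submission
  imports Defs
begin

text \<open>The faces \<open>Z = \<sigma>\<^sub>i Y\<close> are chosen so that \<open>\<sigma>\<^sub>i\<close> solves \<open>\<rho> \<sigma>\<^sup>2 - \<rho> \<sigma> + k = 0\<close>, with
  \<open>k = a\<^sub>3\<^sub>1 - \<mu>\<close> for \<open>\<sigma>\<^sub>1\<close> and \<open>k = -\<mu>\<close> for \<open>\<sigma>\<^sub>2\<close>. On such a face the rate of change of
  \<open>Z - \<sigma> Y\<close> along the field is \<open>Y (a\<^sub>3\<^sub>1 X\<^sub>1 - \<mu> - k)\<close>, i.e. \<open>a\<^sub>3\<^sub>1 Y (X\<^sub>1 - 1) < 0\<close> on \<open>P\<^sub>1\<close> and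
  \<open>a\<^sub>3\<^sub>1 Y X\<^sub>1 > 0\<close> on \<open>P\<^sub>2\<close>. Since \<open>Z - \<sigma> Y\<close> is linear, it then has the wrong sign on the
  whole open ray from \<open>p\<close> in the direction of the field.\<close>

lemma points_outside_if_leaves_halfspace:
  fixes L :: "'a::real_vector \<Rightarrow> real"
  assumes "linear L" and "S \<subseteq> {x. 0 \<le> L x}" and "L p \<le> 0" and "L (F p) < 0"
  shows "points_outside S F p"
  unfolding points_outside_def
proof (intro exI[of _ 1] conjI allI impI)
  fix t :: real
  assume "0 < t \<and> t < 1"
  then have "t * L (F p) < 0"
    using assms(4) by (simp add: mult_pos_neg)
  then have "L (p + t *\<^sub>R F p) < 0"
    using assms(3) by (simp add: linear_add[OF assms(1)] linear_scale[OF assms(1)])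
  then show "p + t *\<^sub>R F p \<notin> S"
    using assms(2) by force
qed simp

lemma quadratic_formula_root:
  fixes \<rho> k :: real
  assumes "\<rho> > 0" and "4 * k \<le> \<rho>"
  shows "\<rho> * ((\<rho> + sqrt (\<rho>\<^sup>2 - 4 * \<rho> * k)) / (2 * \<rho>))\<^sup>2
           - \<rho> * ((\<rho> + sqrt (\<rho>\<^sup>2 - 4 * \<rho> * k)) / (2 * \<rho>)) = - k"
proof -
  define s where "s = sqrt (\<rho>\<^sup>2 - 4 * \<rho> * k)"
  have "\<rho>\<^sup>2 - 4 * \<rho> * k \<ge> 0"
    using assms by (simp add: power2_eq_square)
  then have "s\<^sup>2 = \<rho>\<^sup>2 - 4 * \<rho> * k"
    unfolding s_def by simp
  then show ?thesis
    unfolding s_def[symmetric] using assms(1) by (simp add: field_simps power2_eq_square) algebra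
qed

lemma four_mul_less_sq_div:
  fixes c d k :: real
  assumes "d > 0" and "c > 2 * sqrt (d * k)"
  shows "4 * k < c\<^sup>2 / d"
proof (cases "k < 0")
  case True
  have "0 \<le> c\<^sup>2 / d"
    using assms(1) by simp
  then show ?thesis
    using True by linarith
next
  case False
  then have "(2 * sqrt (d * k))\<^sup>2 < c\<^sup>2"
    using assms by (intro power_strict_mono) auto
  then show ?thesis
    using assms(1) False by (simp add: power_mult_distrib field_simps)
qed

definition face_offset :: "real \<Rightarrow> real \<times> real \<times> real \<times> real \<Rightarrow> real" where
  "face_offset \<sigma> x = (case x of (X1, X2, Y, Z) \<Rightarrow> Z - \<sigma> * Y)"

lemma linear_face_offset: "linear (face_offset \<sigma>)"
  by (rule linearI) (auto simp: face_offset_def algebra_simps)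

lemma face_offset_vf:
  "face_offset \<sigma> (vf r1 r2 \<mu> a12 a13 a21 a31 \<rho> (X1, X2, Y, \<sigma> * Y))
     = Y * (a31 * X1 - \<mu> + (\<rho> * \<sigma>\<^sup>2 - \<rho> * \<sigma>))"
  by (simp add: face_offset_def vf_def algebra_simps power2_eq_square)

lemma points_outside_lower_face:
  assumes "\<rho> * \<sigma>1\<^sup>2 - \<rho> * \<sigma>1 = - (a31 - \<mu>)" and "a31 > 0" and "p \<in> P_set r2 a21 \<sigma>1"
  shows "points_outside (Sigma_set r2 a21 \<sigma>1 \<sigma>2) (vf r1 r2 \<mu> a12 a13 a21 a31 \<rho>) p"
proof -
  obtain X1 X2 Y where p: "p = (X1, X2, Y, \<sigma>1 * Y)" and "X1 < 1" and "Y > 0"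
    using assms(3) unfolding P_set_def by auto
  have "face_offset \<sigma>1 (vf r1 r2 \<mu> a12 a13 a21 a31 \<rho> p) = Y * (a31 * (X1 - 1))"
    unfolding p face_offset_vf assms(1) by (simp add: algebra_simps)
  also have "\<dots> < 0"
    using assms(2) \<open>X1 < 1\<close> \<open>Y > 0\<close> by (simp add: mult_pos_neg)
  finally have "face_offset \<sigma>1 (vf r1 r2 \<mu> a12 a13 a21 a31 \<rho> p) < 0" .
  moreover have "Sigma_set r2 a21 \<sigma>1 \<sigma>2 \<subseteq> {x. 0 \<le> face_offset \<sigma>1 x}"
    by (auto simp: Sigma_set_def face_offset_def)
  ultimately show ?thesis
    by (intro points_outside_if_leaves_halfspace[OF linear_face_offset])
       (simp_all add: p face_offset_def)
qed

lemma points_outside_upper_face: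
  assumes "\<rho> * \<sigma>2\<^sup>2 - \<rho> * \<sigma>2 = \<mu>" and "a31 > 0" and "p \<in> P_set r2 a21 \<sigma>2"
  shows "points_outside (Sigma_set r2 a21 \<sigma>1 \<sigma>2) (vf r1 r2 \<mu> a12 a13 a21 a31 \<rho>) p"
proof -
  obtain X1 X2 Y where p: "p = (X1, X2, Y, \<sigma>2 * Y)" and "X1 > 0" and "Y > 0"
    using assms(3) unfolding P_set_def by auto
  then have "face_offset \<sigma>2 (vf r1 r2 \<mu> a12 a13 a21 a31 \<rho> p) > 0"
    using assms(1,2) by (simp add: p face_offset_vf)
  moreover have "Sigma_set r2 a21 \<sigma>1 \<sigma>2 \<subseteq> {x. face_offset \<sigma>2 x \<le> 0}"
    by (auto simp: Sigma_set_def face_offset_def)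
  ultimately show ?thesis
    by (intro points_outside_if_leaves_halfspace[where L = "\<lambda>x. - face_offset \<sigma>2 x"]
        linear_compose_neg linear_face_offset)
       (auto simp: p face_offset_def)
qed

theorem lemma5:
  fixes r1 r2 \<mu> a12 a13 a21 a31 d c :: real
  assumes "r1 > 0" "r2 > 0" "\<mu> > 0" "a12 > 0" "a13 > 0" "a21 > 0" "a31 > 0" "d > 0"
    and "r1 > a12" and "a31 > \<mu>"
    and "c > 2 * sqrt (d * (a31 - \<mu>))"
  defines "\<rho> \<equiv> c\<^sup>2 / d"
  defines "\<sigma>1 \<equiv> (\<rho> + sqrt (\<rho>\<^sup>2 - 4 * \<rho> * (a31 - \<mu>))) / (2 * \<rho>)"
  defines "\<sigma>2 \<equiv> (\<rho> + sqrt (\<rho>\<^sup>2 + 4 * \<rho> * \<mu>)) / (2 * \<rho>)"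
  assumes "p \<in> P_set r2 a21 \<sigma>1 \<union> P_set r2 a21 \<sigma>2"
  shows "points_outside (Sigma_set r2 a21 \<sigma>1 \<sigma>2) (vf r1 r2 \<mu> a12 a13 a21 a31 \<rho>) p"
proof -
  have \<rho>_gt: "4 * (a31 - \<mu>) < \<rho>"
    unfolding \<rho>_def using assms(8,11) by (rule four_mul_less_sq_div)
  then have "\<rho> > 0"
    using assms(10) by (smt (verit))
  have lower: "\<rho> * \<sigma>1\<^sup>2 - \<rho> * \<sigma>1 = - (a31 - \<mu>)"
    unfolding \<sigma>1_def using \<open>\<rho> > 0\<close> \<rho>_gt by (intro quadratic_formula_root) auto
  have upper: "\<rho> * \<sigma>2\<^sup>2 - \<rho> * \<sigma>2 = \<mu>"
    using quadratic_formula_root[of \<rho> "- \<mu>"] \<open>\<rho> > 0\<close> assms(3) unfolding \<sigma>2_def by simp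
  show ?thesis
    using assms(15)
  proof
    assume "p \<in> P_set r2 a21 \<sigma>1"
    then show ?thesis by (rule points_outside_lower_face[OF lower assms(7)])
  next
    assume "p \<in> P_set r2 a21 \<sigma>2"
    then show ?thesis by (rule points_outside_upper_face[OF upper assms(7)])
  qed
qed

end
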